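(* Let $n>1$ be an integer and let $j_0,\dots,j_{n-1}\in\mathbb Z/(n)$ (indices read in $\mathbb Z/(n)$) satisfy $j_i=j_{-i}$ for all $i$, such that for every nonzero $i\in\mathbb Z/(n)$ there exists $k\in\mathbb Z/(n)$ with $j_{i+k}\neq j_k$, and such that the additive subgroup generated by $j_0,\dots,j_{n-1}$ is $\mathbb Z/(n)$. Define $\sigma_{(i,j)}(k,l)=(k+j,\ l-j_{k+j-i})$ on $(\mathbb Z/(n))^2$ and $r((i,j),(k,l))=(\sigma_{(i,j)}(k,l),\sigma^{-1}_{\sigma_{(i,j)}(k,l)}(i,j))$. Then $((\mathbb Z/(n))^2,r)$ is an indecomposable and irretractable solution of the YBE. If moreover $j_0-j_i$ is invertible in $\mathbb Z/(n)$ for every nonzero $i$, then $((\mathbb Z/(n))^2,r)$ is a simple solution of the YBE.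
   Context: A solution of the YBE is a pair $(X,r)$, $X$ nonempty, $r:X\times X\to X\times X$, $r(x,y)=(\sigma_x(y),\gamma_y(x))$, with $r^2=\mathrm{id}$, all $\sigma_x,\gamma_x$ bijective, and $r_{12}r_{23}r_{12}=r_{23}r_{12}r_{23}$ on $X^3$. Indecomposable: $\langle\sigma_x\rangle\le \mathrm{Sym}_X$ transitive on $X$. Irretractable: $\sigma_x\ne\sigma_y$ for $x\ne y$. A homomorphism of solutions $f:(X,r)\to(Y,s)$ (with $s(t,z)=(\sigma'_t(z),\gamma'_z(t))$) is a map with $f(\sigma_x(y))=\sigma'_{f(x)}(f(y))$; $(X,r)$ is simple if $|X|>1$ and every surjective homomorphism of solutions $f:(X,r)\to(Y,s)$ is bijective or has $|Y|=1$. *)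

theory Defs
  imports Main "HOL-Algebra.Elementary_Groups" "HOL-Algebra.Generated_Groups"
begin

text \<open>For r(x,y) = (sigma_x(y), gamma_y(x)) we read off sigma and gamma from r.\<close>

definition ybe_sigma :: "('a \<times> 'a \<Rightarrow> 'a \<times> 'a) \<Rightarrow> 'a \<Rightarrow> 'a \<Rightarrow> 'a" where
  "ybe_sigma r x y = fst (r (x, y))"

definition ybe_gamma :: "('a \<times> 'a \<Rightarrow> 'a \<times> 'a) \<Rightarrow> 'a \<Rightarrow> 'a \<Rightarrow> 'a" where
  "ybe_gamma r y x = snd (r (x, y))"

definition r12 :: "('a \<times> 'a \<Rightarrow> 'a \<times> 'a) \<Rightarrow> 'a \<times> 'a \<times> 'a \<Rightarrow> 'a \<times> 'a \<times> 'a" where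
  "r12 r t = (case t of (a, b, c) \<Rightarrow> (fst (r (a, b)), snd (r (a, b)), c))"

definition r23 :: "('a \<times> 'a \<Rightarrow> 'a \<times> 'a) \<Rightarrow> 'a \<times> 'a \<times> 'a \<Rightarrow> 'a \<times> 'a \<times> 'a" where
  "r23 r t = (case t of (a, b, c) \<Rightarrow> (a, fst (r (b, c)), snd (r (b, c))))"

definition is_solution :: "'a set \<Rightarrow> ('a \<times> 'a \<Rightarrow> 'a \<times> 'a) \<Rightarrow> bool" where
  "is_solution X r \<longleftrightarrow>
     X \<noteq> {} \<and>
     (\<forall>p \<in> X \<times> X. r p \<in> X \<times> X) \<and>
     (\<forall>p \<in> X \<times> X. r (r p) = p) \<and>
     (\<forall>x \<in> X. bij_betw (ybe_sigma r x) X X) \<and>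
     (\<forall>x \<in> X. bij_betw (ybe_gamma r x) X X) \<and>
     (\<forall>t \<in> X \<times> X \<times> X. r12 r (r23 r (r12 r t)) = r23 r (r12 r (r23 r t)))"

text \<open>Orbit of x under the permutation group generated by all sigma_z (z in X):
  closure under the sigma_z and their inverses (inverses taken as permutations of X).\<close>

inductive_set sigma_orbit :: "'a set \<Rightarrow> ('a \<times> 'a \<Rightarrow> 'a \<times> 'a) \<Rightarrow> 'a \<Rightarrow> 'a set"
  for X r x where
  base: "x \<in> sigma_orbit X r x"
| step: "y \<in> sigma_orbit X r x \<Longrightarrow> z \<in> X \<Longrightarrow> ybe_sigma r z y \<in> sigma_orbit X r x"
| step_inv: "y \<in> sigma_orbit X r x \<Longrightarrow> z \<in> X \<Longrightarrow>
             inv_into X (ybe_sigma r z) y \<in> sigma_orbit X r x"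

definition indecomposable :: "'a set \<Rightarrow> ('a \<times> 'a \<Rightarrow> 'a \<times> 'a) \<Rightarrow> bool" where
  "indecomposable X r \<longleftrightarrow> (\<forall>x \<in> X. \<forall>y \<in> X. y \<in> sigma_orbit X r x)"

definition irretractable :: "'a set \<Rightarrow> ('a \<times> 'a \<Rightarrow> 'a \<times> 'a) \<Rightarrow> bool" where
  "irretractable X r \<longleftrightarrow>
     (\<forall>x \<in> X. \<forall>y \<in> X. x \<noteq> y \<longrightarrow> (\<exists>z \<in> X. ybe_sigma r x z \<noteq> ybe_sigma r y z))"

definition sol_hom :: "'a set \<Rightarrow> ('a \<times> 'a \<Rightarrow> 'a \<times> 'a) \<Rightarrow> 'b set \<Rightarrow> ('b \<times> 'b \<Rightarrow> 'b \<times> 'b)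
                       \<Rightarrow> ('a \<Rightarrow> 'b) \<Rightarrow> bool" where
  "sol_hom X r Y s f \<longleftrightarrow>
     (\<forall>x \<in> X. f x \<in> Y) \<and>
     (\<forall>x \<in> X. \<forall>y \<in> X. f (ybe_sigma r x y) = ybe_sigma s (f x) (f y))"

text \<open>Simplicity, relative to target solutions whose underlying set lives in the type 'b.
  In the main theorem 'b is a free (hence universally quantified) type variable.\<close>

definition simple_sol :: "'b itself \<Rightarrow> 'a set \<Rightarrow> ('a \<times> 'a \<Rightarrow> 'a \<times> 'a) \<Rightarrow> bool" where
  "simple_sol (_ :: 'b itself) X r \<longleftrightarrow>
     card X > 1 \<and>
     (\<forall>(Y :: 'b set) s f. is_solution Y s \<and> sol_hom X r Y s f \<and> f ` X = Y
        \<longrightarrow> bij_betw f X Y \<or> card Y = 1)"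

definition zn :: "nat \<Rightarrow> int set" where
  "zn n = {0..<int n}"

definition sig6 :: "nat \<Rightarrow> (int \<Rightarrow> int) \<Rightarrow> int \<times> int \<Rightarrow> int \<times> int \<Rightarrow> int \<times> int" where
  "sig6 n J x y = (case x of (i, a) \<Rightarrow> case y of (k, l) \<Rightarrow>
      ((k + a) mod int n, (l - J ((k + a - i) mod int n)) mod int n))"

definition r6 :: "nat \<Rightarrow> (int \<Rightarrow> int) \<Rightarrow> (int \<times> int) \<times> (int \<times> int) \<Rightarrow> (int \<times> int) \<times> (int \<times> int)" where
  "r6 n J p = (case p of (x, y) \<Rightarrow>
      (sig6 n J x y, inv_into (zn n \<times> zn n) (sig6 n J (sig6 n J x y)) x))"

end

theory Submission
  imports Defs
begin

text \<open>
  Lift \<sigma> and \<gamma> to integer representatives: on \<int> \<times> \<int> the involutivity of r and the braid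
  relation become ring identities in which J only occurs through an even, n-periodic function,
  and reduction mod n commutes with both maps.  The maps \<sigma>(i,0) and \<sigma>(0,a) move the second
  and the first coordinate, so the permutation group is transitive as soon as the values of J
  generate \<int>/(n); and \<sigma>(i,a) differs from \<sigma>(i',a) because no nonzero translate of J equals J.
  For simplicity, a homomorphism f that identifies two points can be pushed by these maps until
  it identifies two points with equal second coordinate; then f is invariant under a shift of
  the second coordinate by the unit J 0 - J i, hence constant on a row, hence constant.
\<close>

section \<open>Homomorphisms of solutions\<close>

lemma sol_hom_sigma_cong_left:
  assumes "sol_hom X r Y s f" "x \<in> X" "x' \<in> X" "y \<in> X" "f x = f x'"
  shows "f (ybe_sigma r x y) = f (ybe_sigma r x' y)"
  using assms unfolding sol_hom_def by metis

lemma sol_hom_sigma_cong_right: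
  assumes "sol_hom X r Y s f" "x \<in> X" "y \<in> X" "y' \<in> X" "f y = f y'"
  shows "f (ybe_sigma r x y) = f (ybe_sigma r x y')"
  using assms unfolding sol_hom_def by metis

lemma sol_hom_sigma_cancel:
  assumes "is_solution Y s" "sol_hom X r Y s f" "x \<in> X" "y \<in> X" "y' \<in> X"
    and "f (ybe_sigma r x y) = f (ybe_sigma r x y')"
  shows "f y = f y'"
proof -
  have "inj_on (ybe_sigma s (f x)) Y"
    using assms(1-3) by (auto simp: is_solution_def sol_hom_def bij_betw_def)
  moreover have "ybe_sigma s (f x) (f y) = ybe_sigma s (f x) (f y')"
    using assms(2-6) by (simp add: sol_hom_def)
  ultimately show ?thesis
    using assms(2,4,5) by (auto simp: sol_hom_def dest: inj_onD)
qed

lemma sol_hom_sigma_inv_cong_left: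
  assumes X: "is_solution X r" and Y: "is_solution Y s" and f: "sol_hom X r Y s f"
    and "x \<in> X" "x' \<in> X" "w \<in> X" "f x = f x'"
  shows "f (inv_into X (ybe_sigma r x) w) = f (inv_into X (ybe_sigma r x') w)"
proof -
  have bij: "bij_betw (ybe_sigma r z) X X" if "z \<in> X" for z
    using X that by (simp add: is_solution_def)
  define y where "y = inv_into X (ybe_sigma r x') w"
  have y: "y \<in> X" "ybe_sigma r x' y = w"
    using bij[OF \<open>x' \<in> X\<close>] \<open>w \<in> X\<close> unfolding y_def
    by (auto simp: bij_betw_def f_inv_into_f inv_into_into)
  have "f (ybe_sigma r x y) = f (ybe_sigma r x (inv_into X (ybe_sigma r x) w))"
    using sol_hom_sigma_cong_left[OF f \<open>x \<in> X\<close> \<open>x' \<in> X\<close> y(1) \<open>f x = f x'\<close>]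
      bij[OF \<open>x \<in> X\<close>] \<open>w \<in> X\<close> y(2)
    by (simp add: bij_betw_def f_inv_into_f)
  then show ?thesis
    using sol_hom_sigma_cancel[OF Y f \<open>x \<in> X\<close> y(1)] bij[OF \<open>x \<in> X\<close>] \<open>w \<in> X\<close>
    by (metis bij_betw_imp_surj_on inv_into_into y_def)
qed

lemma simple_solI:
  assumes "card X > 1"
    and "\<And>(Y :: 'b set) s f. is_solution Y s \<Longrightarrow> sol_hom X r Y s f \<Longrightarrow> \<not> inj_on f X
           \<Longrightarrow> \<exists>c. \<forall>x \<in> X. f x = c"
  shows "simple_sol TYPE('b) X r"
  unfolding simple_sol_def
proof (intro conjI allI impI)
  fix Y :: "'b set" and s f
  assume hom: "is_solution Y s \<and> sol_hom X r Y s f \<and> f ` X = Y"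
  show "bij_betw f X Y \<or> card Y = 1"
  proof (cases "inj_on f X")
    case False
    then obtain c where "\<forall>x \<in> X. f x = c" using assms(2) hom by blast
    moreover have "X \<noteq> {}" using assms(1) by auto
    ultimately have "Y = {c}" using hom by auto
    then show ?thesis by simp
  qed (use hom in \<open>simp add: bij_betw_def\<close>)
qed (use assms(1) in simp)

section \<open>The solution on \<int>/(n) \<times> \<int>/(n)\<close>

locale cyclic_solution =
  fixes n :: nat and J :: "int \<Rightarrow> int"
  assumes n_gt: "n > 1"
    and J_range: "\<forall>i \<in> zn n. J i \<in> zn n"
    and J_sym: "\<forall>i \<in> zn n. J ((- i) mod int n) = J i"
begin

abbreviation "N \<equiv> int n"
abbreviation "X \<equiv> zn n \<times> zn n"

lemma N_pos: "N > 0" using n_gt by simp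

lemma mem_zn_iff: "t \<in> zn n \<longleftrightarrow> 0 \<le> t \<and> t < N" by (simp add: zn_def)

lemma zero_in_zn [simp]: "0 \<in> zn n" using N_pos by (simp add: mem_zn_iff)

lemma mod_in_zn [simp]: "t mod N \<in> zn n" using N_pos by (simp add: mem_zn_iff)

lemma mod_zn_eq [simp]: "t \<in> zn n \<Longrightarrow> t mod N = t" by (simp add: mem_zn_iff)

lemma diff_mod_nonzero: "i \<in> zn n \<Longrightarrow> i' \<in> zn n \<Longrightarrow> i \<noteq> i' \<Longrightarrow> (i - i') mod N \<noteq> 0"
  by (metis mod_zn_eq mod_eq_dvd_iff dvd_eq_mod_eq_0)

lemma uminus_mod_inj_on_zn: "u \<in> zn n \<Longrightarrow> v \<in> zn n \<Longrightarrow> (- u) mod N = (- v) mod N \<Longrightarrow> u = v"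
  by (metis mod_minus_eq minus_minus mod_zn_eq)

lemma carrier_integer_mod_group_eq_zn: "carrier (integer_mod_group n) = zn n"
  using N_pos by (simp add: carrier_integer_mod_group zn_def)

definition Jmod :: "int \<Rightarrow> int" where "Jmod t = J (t mod N)"

lemma Jmod_in_zn: "Jmod t \<in> zn n" using J_range by (simp add: Jmod_def)

lemma Jmod_mod [simp]: "Jmod t mod N = Jmod t" using Jmod_in_zn mod_zn_eq by blast

lemma Jmod_zero [simp]: "Jmod 0 = J 0" by (simp add: Jmod_def)

lemma Jmod_cong: "a mod N = b mod N \<Longrightarrow> Jmod a = Jmod b" by (simp add: Jmod_def)

lemma Jmod_mod_arg [simp]: "Jmod (t mod N) = Jmod t" by (simp add: Jmod_def)

lemma Jmod_uminus: "Jmod (- t) = Jmod t"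
proof -
  have "J ((- (t mod N)) mod N) = J (t mod N)" using J_sym by simp
  then show ?thesis by (simp add: Jmod_def mod_minus_eq)
qed

lemma Jmod_diff_commute: "Jmod (a - b) = Jmod (b - a)"
  using Jmod_uminus[of "b - a"] by simp

definition reduce :: "int \<times> int \<Rightarrow> int \<times> int" where
  "reduce p = (fst p mod N, snd p mod N)"

lemma reduce_Pair [simp]: "reduce (a, b) = (a mod N, b mod N)" by (simp add: reduce_def)

lemma reduce_in_X [simp]: "reduce p \<in> X" by (cases p) simp

lemma reduce_id [simp]: "p \<in> X \<Longrightarrow> reduce p = p" by (cases p) auto

definition sig_lift :: "int \<times> int \<Rightarrow> int \<times> int \<Rightarrow> int \<times> int" where
  "sig_lift x y = (fst y + snd x, snd y - Jmod (fst y + snd x - fst x))"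

definition gam_lift :: "int \<times> int \<Rightarrow> int \<times> int \<Rightarrow> int \<times> int" where
  "gam_lift x y =
     (fst x + Jmod (fst y + snd x - fst x) - snd y, snd x + Jmod (fst y + snd x - fst x))"

lemma sig_lift_Pair [simp]: "sig_lift (i, a) (k, l) = (k + a, l - Jmod (k + a - i))"
  by (simp add: sig_lift_def)

lemma gam_lift_Pair [simp]:
  "gam_lift (i, a) (k, l) = (i + Jmod (k + a - i) - l, a + Jmod (k + a - i))"
  by (simp add: gam_lift_def)

lemma mod_add_diff_mod: "(k mod N + a mod N - i mod N) mod N = (k + a - i) mod N"
  by (intro mod_diff_cong mod_add_cong) simp_all

lemma reduce_sig_lift: "reduce (sig_lift (reduce x) (reduce y)) = reduce (sig_lift x y)"
proof (cases x; cases y)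
  fix i a k l assume [simp]: "x = (i, a)" "y = (k, l)"
  show ?thesis using mod_add_diff_mod[of k a i] Jmod_cong[OF mod_add_diff_mod[of k a i]]
    by (simp add: mod_simps)
qed

lemma reduce_gam_lift: "reduce (gam_lift (reduce x) (reduce y)) = reduce (gam_lift x y)"
proof (cases x; cases y)
  fix i a k l assume [simp]: "x = (i, a)" "y = (k, l)"
  have "(i mod N + Jmod (k + a - i) - l mod N) mod N = (i + Jmod (k + a - i) - l) mod N"
    by (intro mod_diff_cong mod_add_cong) simp_all
  then show ?thesis using Jmod_cong[OF mod_add_diff_mod[of k a i]] by (simp add: mod_simps)
qed

lemma reduce_sig_lift_reduce [simp]:
  "reduce (sig_lift (reduce x) y) = reduce (sig_lift x y)"
  "reduce (sig_lift x (reduce y)) = reduce (sig_lift x y)"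
  by (metis reduce_sig_lift reduce_in_X reduce_id)+

lemma reduce_gam_lift_reduce [simp]:
  "reduce (gam_lift (reduce x) y) = reduce (gam_lift x y)"
  "reduce (gam_lift x (reduce y)) = reduce (gam_lift x y)"
  by (metis reduce_gam_lift reduce_in_X reduce_id)+

lemma sig6_eq_reduce: "sig6 n J x y = reduce (sig_lift x y)"
  by (cases x; cases y) (simp add: sig6_def Jmod_def)

definition sig_inv :: "int \<times> int \<Rightarrow> int \<times> int \<Rightarrow> int \<times> int" where
  "sig_inv x y = reduce (fst y - snd x, snd y + Jmod (fst y - fst x))"

lemma sig_inv_Pair: "sig_inv (i, a) (u, v) = ((u - a) mod N, (v + Jmod (u - i)) mod N)"
  by (simp add: sig_inv_def)

lemma sig6_in_X: "sig6 n J x y \<in> X" by (simp add: sig6_eq_reduce)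

lemma sig_inv_in_X: "sig_inv x y \<in> X" by (simp add: sig_inv_def)

lemma sig_inv_sig6: "y \<in> X \<Longrightarrow> sig_inv x (sig6 n J x y) = y"
proof (cases x; cases y)
  fix i a k l assume [simp]: "x = (i, a)" "y = (k, l)" and y: "y \<in> X"
  have "Jmod ((k + a) mod N - i) = Jmod (k + a - i)" by (rule Jmod_cong) (simp add: mod_simps)
  then show ?thesis using y by (simp add: sig6_eq_reduce sig_inv_Pair mod_simps)
qed

lemma sig6_sig_inv: "y \<in> X \<Longrightarrow> sig6 n J x (sig_inv x y) = y"
proof (cases x; cases y)
  fix i a k l assume [simp]: "x = (i, a)" "y = (k, l)" and y: "y \<in> X"
  have "((k - a) mod N + a - i) mod N = ((k - a) mod N + (a - i)) mod N" by (simp add: add_diff_eq)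
  also have "\<dots> = (k - i) mod N" by (simp add: mod_add_left_eq)
  finally have "Jmod ((k - a) mod N + a - i) = Jmod (k - i)" by (rule Jmod_cong)
  then show ?thesis using y by (simp add: sig6_eq_reduce sig_inv_Pair mod_simps)
qed

lemma inv_into_sig6: "y \<in> X \<Longrightarrow> inv_into X (sig6 n J x) y = sig_inv x y"
  by (metis inv_into_f_eq inj_on_inverseI sig_inv_sig6 sig_inv_in_X sig6_sig_inv)

lemma bij_betw_sig6: "bij_betw (sig6 n J x) X X"
proof (rule bij_betw_byWitness[where f'="sig_inv x"])
  show "sig6 n J x ` X \<subseteq> X" "sig_inv x ` X \<subseteq> X" using sig6_in_X sig_inv_in_X by blast+
qed (auto simp: sig_inv_sig6 sig6_sig_inv)

lemma sig_inv_reduce_sig_lift: "x \<in> X \<Longrightarrow> sig_inv (reduce (sig_lift x y)) x = reduce (gam_lift x y)"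
proof (cases x; cases y)
  fix i a k l assume [simp]: "x = (i, a)" "y = (k, l)" and x: "x \<in> X"
  have "Jmod (i - (k + a) mod N) = Jmod (k + a - i)"
    using Jmod_diff_commute[of i "k + a"] by (metis Jmod_cong mod_diff_right_eq)
  then show ?thesis using x by (simp add: sig_inv_Pair mod_simps diff_diff_eq2)
qed

lemma r6_eq_reduce:
  "x \<in> X \<Longrightarrow> y \<in> X \<Longrightarrow> r6 n J (x, y) = (reduce (sig_lift x y), reduce (gam_lift x y))"
  by (simp add: r6_def inv_into_sig6 sig6_in_X sig6_eq_reduce sig_inv_reduce_sig_lift)

lemma ybe_sigma_r6: "ybe_sigma (r6 n J) x = sig6 n J x"
  by (rule ext) (simp add: ybe_sigma_def r6_def)

lemma ybe_gamma_r6: "x \<in> X \<Longrightarrow> y \<in> X \<Longrightarrow> ybe_gamma (r6 n J) y x = reduce (gam_lift x y)"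
  by (simp add: ybe_gamma_def r6_eq_reduce)

lemma r6_involutive: "x \<in> X \<Longrightarrow> y \<in> X \<Longrightarrow> r6 n J (r6 n J (x, y)) = (x, y)"
proof (cases x; cases y)
  fix i a k l assume [simp]: "x = (i, a)" "y = (k, l)" and x: "x \<in> X" and y: "y \<in> X"
  have "r6 n J (r6 n J (x, y)) =
      (reduce (sig_lift (sig_lift x y) (gam_lift x y)), reduce (gam_lift (sig_lift x y) (gam_lift x y)))"
    using x y by (simp add: r6_eq_reduce del: reduce_Pair sig_lift_Pair gam_lift_Pair)
  also have "\<dots> = (x, y)"
    using x y Jmod_diff_commute[of i "k + a"] by simp
  finally show ?thesis .
qed

lemma r6_braid:
  assumes x: "x1 \<in> X" "x2 \<in> X" "x3 \<in> X"
  shows "r12 (r6 n J) (r23 (r6 n J) (r12 (r6 n J) (x1, x2, x3)))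
       = r23 (r6 n J) (r12 (r6 n J) (r23 (r6 n J) (x1, x2, x3)))"
proof -
  have "sig_lift (sig_lift x1 x2) (sig_lift (gam_lift x1 x2) x3) = sig_lift x1 (sig_lift x2 x3)"
    and "gam_lift (sig_lift x1 x2) (sig_lift (gam_lift x1 x2) x3)
       = sig_lift (gam_lift x1 (sig_lift x2 x3)) (gam_lift x2 x3)"
    and "gam_lift (gam_lift x1 x2) x3 = gam_lift (gam_lift x1 (sig_lift x2 x3)) (gam_lift x2 x3)"
    by (cases x1; cases x2; cases x3; simp add: algebra_simps)+
  then show ?thesis
    using x by (simp add: r12_def r23_def r6_eq_reduce del: reduce_Pair sig_lift_Pair gam_lift_Pair)
qed

definition gam_lift_inv :: "int \<times> int \<Rightarrow> int \<times> int \<Rightarrow> int \<times> int" where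
  "gam_lift_inv y p =
     (fst p + snd y - Jmod (fst y + snd p - fst p - snd y), snd p - Jmod (fst y + snd p - fst p - snd y))"

lemma gam_lift_inv_Pair [simp]:
  "gam_lift_inv (k, l) (s, t) = (s + l - Jmod (k + t - s - l), t - Jmod (k + t - s - l))"
  by (simp add: gam_lift_inv_def)

lemma reduce_gam_lift_inv: "reduce (gam_lift_inv y (reduce p)) = reduce (gam_lift_inv y p)"
proof (cases y; cases p)
  fix k l s t assume [simp]: "y = (k, l)" "p = (s, t)"
  have "(k + t mod N - s mod N - l) mod N = (k + t - s - l) mod N"
    by (intro mod_diff_cong mod_add_cong) simp_all
  then have "Jmod (k + t mod N - s mod N - l) = Jmod (k + t - s - l)" by (rule Jmod_cong)
  moreover have "(s mod N + l - Jmod (k + t - s - l)) mod N = (s + l - Jmod (k + t - s - l)) mod N"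
    by (intro mod_diff_cong mod_add_cong) simp_all
  ultimately show ?thesis by (simp add: mod_simps)
qed

lemma gam_lift_inv_gam_lift: "gam_lift_inv y (gam_lift x y) = x"
  by (cases x; cases y) (simp add: algebra_simps)

lemma gam_lift_gam_lift_inv: "gam_lift (gam_lift_inv y p) y = p"
  by (cases p; cases y) (simp add: algebra_simps)

lemma bij_betw_ybe_gamma_r6: "y \<in> X \<Longrightarrow> bij_betw (ybe_gamma (r6 n J) y) X X"
proof -
  assume y: "y \<in> X"
  have "bij_betw (\<lambda>x. reduce (gam_lift x y)) X X"
  proof (rule bij_betw_byWitness[where f'="\<lambda>p. reduce (gam_lift_inv y p)"])
    show "(\<lambda>x. reduce (gam_lift x y)) ` X \<subseteq> X" "(\<lambda>p. reduce (gam_lift_inv y p)) ` X \<subseteq> X"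
      using reduce_in_X by blast+
  qed (simp_all add: reduce_gam_lift_inv gam_lift_inv_gam_lift gam_lift_gam_lift_inv
        del: reduce_Pair gam_lift_Pair gam_lift_inv_Pair)
  then show ?thesis
    by (rule bij_betw_cong[THEN iffD1, rotated]) (simp add: ybe_gamma_r6 y)
qed

lemma is_solution_r6: "is_solution X (r6 n J)"
  unfolding is_solution_def
proof (intro conjI ballI)
  show "X \<noteq> {}" using zero_in_zn by blast
  show "r6 n J p \<in> X \<times> X" if "p \<in> X \<times> X" for p
    using that by (auto simp: r6_eq_reduce simp del: reduce_Pair)
  show "r6 n J (r6 n J p) = p" if "p \<in> X \<times> X" for p
    using that by (cases p) (simp add: r6_involutive del: reduce_Pair)
  show "r12 (r6 n J) (r23 (r6 n J) (r12 (r6 n J) t)) = r23 (r6 n J) (r12 (r6 n J) (r23 (r6 n J) t))"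
    if "t \<in> X \<times> X \<times> X" for t
    using that r6_braid by auto
qed (simp_all add: ybe_sigma_r6 bij_betw_sig6 bij_betw_ybe_gamma_r6)

section \<open>Indecomposability and irretractability\<close>

lemma sigma_orbit_subset_X: "x \<in> X \<Longrightarrow> y \<in> sigma_orbit X (r6 n J) x \<Longrightarrow> y \<in> X"
  by (rotate_tac, induction rule: sigma_orbit.induct)
    (auto simp: ybe_sigma_r6 sig6_in_X inv_into_sig6 sig_inv_in_X)

lemma sigma_orbit_diff_snd:
  assumes x: "x \<in> X" and kl: "(k, l) \<in> sigma_orbit X (r6 n J) x"
  shows "(k, (l - Jmod m) mod N) \<in> sigma_orbit X (r6 n J) x"
proof -
  have "(k, l) \<in> X" using sigma_orbit_subset_X[OF x kl] .
  moreover have "Jmod (k + 0 - (k - m) mod N) = Jmod m"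
    by (rule Jmod_cong) (simp add: mod_diff_right_eq)
  ultimately have "sig6 n J ((k - m) mod N, 0) (k, l) = (k, (l - Jmod m) mod N)"
    by (simp add: sig6_eq_reduce)
  then show ?thesis
    using sigma_orbit.step[OF kl, of "((k - m) mod N, 0)"] by (simp add: ybe_sigma_r6)
qed

lemma sigma_orbit_add_snd:
  assumes x: "x \<in> X" and kl: "(k, l) \<in> sigma_orbit X (r6 n J) x"
  shows "(k, (l + Jmod m) mod N) \<in> sigma_orbit X (r6 n J) x"
proof -
  have "(k, l) \<in> X" using sigma_orbit_subset_X[OF x kl] .
  moreover have "Jmod (k - (k - m) mod N) = Jmod m"
    by (rule Jmod_cong) (simp add: mod_diff_right_eq)
  ultimately have "inv_into X (sig6 n J ((k - m) mod N, 0)) (k, l) = (k, (l + Jmod m) mod N)"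
    by (simp add: inv_into_sig6 sig_inv_Pair)
  then show ?thesis
    using sigma_orbit.step_inv[OF kl, of "((k - m) mod N, 0)"] by (simp add: ybe_sigma_r6)
qed

lemma sigma_orbit_add_fst:
  assumes "(k, l) \<in> sigma_orbit X (r6 n J) x"
  shows "\<exists>l'. ((k + a) mod N, l') \<in> sigma_orbit X (r6 n J) x"
proof -
  have "fst (sig6 n J (0, a mod N) (k, l)) = (k + a) mod N"
    by (simp add: sig6_eq_reduce mod_simps)
  moreover have "(0, a mod N) \<in> X" by simp
  ultimately show ?thesis
    using sigma_orbit.step[OF assms] by (metis prod.collapse ybe_sigma_r6)
qed

lemma sigma_orbit_add_generate_snd:
  assumes x: "x \<in> X" and g: "g \<in> generate (integer_mod_group n) (J ` zn n)"
  shows "(k, l) \<in> sigma_orbit X (r6 n J) x \<Longrightarrow> (k, (l + g) mod N) \<in> sigma_orbit X (r6 n J) x"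
  using g
proof (induction arbitrary: l rule: generate.induct)
  case one
  then show ?case using sigma_orbit_subset_X[OF x] by fastforce
next
  case (incl h)
  then obtain m where "m \<in> zn n" "h = J m" by blast
  then have "h = Jmod m" by (simp add: Jmod_def)
  then show ?case using sigma_orbit_add_snd[OF x incl.prems] by blast
next
  case (inv h)
  then obtain m where "m \<in> zn n" "h = J m" by blast
  then have h: "h = Jmod m" by (simp add: Jmod_def)
  then have "inv\<^bsub>integer_mod_group n\<^esub> h = (- h) mod N"
    using Jmod_in_zn carrier_integer_mod_group_eq_zn by simp
  moreover have "(l + (- h) mod N) mod N = (l - h) mod N" by (simp add: mod_simps)
  ultimately show ?case using sigma_orbit_diff_snd[OF x inv.prems] h by simp
next
  case (eng h1 h2)
  then have "(k, ((l + h1) mod N + h2) mod N) \<in> sigma_orbit X (r6 n J) x" by blast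
  moreover have "((l + h1) mod N + h2) mod N = (l + (h1 + h2) mod N) mod N"
    by (simp add: mod_simps ac_simps)
  ultimately show ?case by simp
qed

lemma indecomposable_r6:
  assumes J_gen: "generate (integer_mod_group n) (J ` zn n) = carrier (integer_mod_group n)"
  shows "indecomposable X (r6 n J)"
  unfolding indecomposable_def
proof (intro ballI)
  fix x y assume x: "x \<in> X" and y: "y \<in> X"
  obtain k0 l0 where x0: "x = (k0, l0)" by (cases x)
  obtain k l where y0: "y = (k, l)" by (cases y)
  have "(k0, l0) \<in> sigma_orbit X (r6 n J) x" using x0 sigma_orbit.base by simp
  then obtain l1 where "((k0 + (k - k0)) mod N, l1) \<in> sigma_orbit X (r6 n J) x"
    using sigma_orbit_add_fst by blast
  then have "(k, l1) \<in> sigma_orbit X (r6 n J) x" using y y0 by simp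
  moreover have "(l - l1) mod N \<in> generate (integer_mod_group n) (J ` zn n)"
    using J_gen carrier_integer_mod_group_eq_zn by simp
  ultimately have "(k, (l1 + (l - l1) mod N) mod N) \<in> sigma_orbit X (r6 n J) x"
    using sigma_orbit_add_generate_snd[OF x] by blast
  moreover have "(l1 + (l - l1) mod N) mod N = l" using y y0 by (simp add: mod_simps)
  ultimately show "y \<in> sigma_orbit X (r6 n J) x" using y0 by simp
qed

lemma sig6_separates_fst:
  assumes J_shift: "\<forall>i \<in> zn n. i \<noteq> 0 \<longrightarrow> (\<exists>k \<in> zn n. J ((i + k) mod N) \<noteq> J k)"
    and i: "i \<in> zn n" "i' \<in> zn n" "i \<noteq> i'"
  shows "\<exists>z \<in> X. sig6 n J (i, a) z \<noteq> sig6 n J (i', a) z"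
proof -
  obtain m where m: "m \<in> zn n" "J (((i - i') mod N + m) mod N) \<noteq> J m"
    using J_shift diff_mod_nonzero[OF i] mod_in_zn by blast
  define k where "k = (m - a + i) mod N"
  have "(k + a - i') mod N = (m - a + i + a - i') mod N"
    unfolding k_def by (intro mod_diff_cong mod_add_cong) simp_all
  also have "m - a + i + a - i' = i - i' + m" by simp
  also have "(i - i' + m) mod N = ((i - i') mod N + m) mod N" by (rule mod_add_left_eq[symmetric])
  finally have "Jmod (k + a - i') = J (((i - i') mod N + m) mod N)" by (simp add: Jmod_def)
  moreover have "(k + a - i) mod N = (m - a + i + a - i) mod N"
    unfolding k_def by (intro mod_diff_cong mod_add_cong) simp_all
  then have "Jmod (k + a - i) = J m" using m(1) by (simp add: Jmod_def)
  ultimately have "(- Jmod (k + a - i)) mod N \<noteq> (- Jmod (k + a - i')) mod N"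
    using m(2) uminus_mod_inj_on_zn[OF Jmod_in_zn Jmod_in_zn, of "k + a - i" "k + a - i'"] by auto
  then have "sig6 n J (i, a) (k, 0) \<noteq> sig6 n J (i', a) (k, 0)"
    by (simp add: sig6_eq_reduce)
  moreover have "(k, 0) \<in> X" by (simp add: k_def)
  ultimately show ?thesis by blast
qed

lemma irretractable_r6:
  assumes J_shift: "\<forall>i \<in> zn n. i \<noteq> 0 \<longrightarrow> (\<exists>k \<in> zn n. J ((i + k) mod N) \<noteq> J k)"
  shows "irretractable X (r6 n J)"
  unfolding irretractable_def ybe_sigma_r6
proof (intro ballI impI)
  fix x y assume x: "x \<in> X" and y: "y \<in> X" and xy: "x \<noteq> y"
  obtain i a i' a' where xy0: "x = (i, a)" "y = (i', a')" by (cases x, cases y)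
  show "\<exists>z \<in> X. sig6 n J x z \<noteq> sig6 n J y z"
  proof (cases "a = a'")
    case True
    then have "i \<noteq> i'" using xy unfolding xy0 by simp
    then show ?thesis
      using sig6_separates_fst[OF J_shift] x y True unfolding xy0 by blast
  next
    case False
    have "fst (sig6 n J (i, a) (0, 0)) = a" "fst (sig6 n J (i', a') (0, 0)) = a'"
      using x y unfolding xy0 by (simp_all add: sig6_eq_reduce)
    then have "sig6 n J x (0, 0) \<noteq> sig6 n J y (0, 0)"
      using False unfolding xy0 by metis
    moreover have "(0, 0) \<in> X" by simp
    ultimately show ?thesis by blast
  qed
qed

section \<open>Simplicity\<close>

lemma unit_multiple_exists:
  assumes "(d * u) mod N = 1"
  shows "\<exists>t :: nat. (int t * d) mod N = e mod N"
proof
  have "(int (nat ((e * u) mod N)) * d) mod N = (e * u * d) mod N"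
    using N_pos by (simp add: mod_mult_left_eq)
  also have "\<dots> = (e * ((d * u) mod N)) mod N" by (simp add: mod_mult_right_eq ac_simps)
  finally show "(int (nat ((e * u) mod N)) * d) mod N = e mod N" using assms by simp
qed

lemma const_of_shift_invariant:
  assumes d: "(d * u) mod N = 1" and P: "\<forall>w \<in> zn n. P w = P ((w + d) mod N)"
    and w: "w \<in> zn n" and w': "w' \<in> zn n"
  shows "P w = P w'"
proof -
  have iterate: "P w = P ((w + int t * d) mod N)" for t
  proof (induction t)
    case (Suc t)
    have "((w + int t * d) mod N + d) mod N = (w + int t * d + d) mod N"
      by (simp add: mod_add_left_eq)
    also have "\<dots> = (w + int (Suc t) * d) mod N" by (simp add: algebra_simps)
    moreover have "P ((w + int t * d) mod N) = P (((w + int t * d) mod N + d) mod N)"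
      using P mod_in_zn by blast
    ultimately show ?case using Suc by simp
  qed (use w in simp)
  obtain t :: nat where "(int t * d) mod N = (w' - w) mod N"
    using unit_multiple_exists[OF d] by blast
  then have "(w + int t * d) mod N = (w + (w' - w)) mod N" by (metis mod_add_right_eq)
  then show ?thesis using iterate[of t] w' by simp
qed

lemma Jmod_mod_add_left: "Jmod (k mod N + a - i) = Jmod (k + a - i)"
  by (rule Jmod_cong) (intro mod_diff_cong mod_add_cong; simp)

context
  fixes Y :: "'b set" and s :: "'b \<times> 'b \<Rightarrow> 'b \<times> 'b" and f :: "int \<times> int \<Rightarrow> 'b"
  assumes Y_sol: "is_solution Y s" and hom: "sol_hom X (r6 n J) Y s f"
    and J_diff_unit: "\<forall>i \<in> zn n. i \<noteq> 0 \<longrightarrow> (\<exists>u \<in> zn n. ((J 0 - J i) * u) mod N = 1)"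
begin

lemmas hom_sig6_cong_left = sol_hom_sigma_cong_left[OF hom, unfolded ybe_sigma_r6]
lemmas hom_sig6_cong_right = sol_hom_sigma_cong_right[OF hom, unfolded ybe_sigma_r6]

lemma hom_sig_inv_cong_left:
  assumes "x \<in> X" "x' \<in> X" "w \<in> X" "f x = f x'"
  shows "f (sig_inv x w) = f (sig_inv x' w)"
  using sol_hom_sigma_inv_cong_left[OF is_solution_r6 Y_sol hom assms]
  by (simp only: ybe_sigma_r6 inv_into_sig6[OF \<open>w \<in> X\<close>])

lemma hom_snd_shift_of_collision:
  assumes p: "p \<in> zn n" "p' \<in> zn n" "c \<in> zn n" and w: "w \<in> zn n"
    and collision: "f (p, c) = f (p', c)"
  shows "f (p, w) = f (p, (w + (J 0 - Jmod (p - p'))) mod N)"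
proof -
  \<comment> \<open>\<sigma>(p,c) and \<sigma>(p',c) move y into row p, at heights differing by J 0 - J (p - p')\<close>
  define y where "y = ((p - c) mod N, (w + J 0) mod N)"
  have "Jmod ((p - c) mod N + c - p) = J 0" by (simp add: Jmod_mod_add_left)
  then have "sig6 n J (p, c) y = (p, w)" using p w by (simp add: y_def sig6_eq_reduce mod_simps)
  moreover have "Jmod ((p - c) mod N + c - p') = Jmod (p - p')" by (simp add: Jmod_mod_add_left)
  then have "sig6 n J (p', c) y = (p, (w + (J 0 - Jmod (p - p'))) mod N)"
    using p by (simp add: y_def sig6_eq_reduce mod_simps algebra_simps)
  ultimately show ?thesis
    using hom_sig6_cong_left[of "(p, c)" "(p', c)" y] p collision by (simp add: y_def)
qed

lemma hom_row_const_of_collision: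
  assumes p: "p \<in> zn n" "p' \<in> zn n" "c \<in> zn n" "p \<noteq> p'"
    and collision: "f (p, c) = f (p', c)"
    and w: "w \<in> zn n" "w' \<in> zn n"
  shows "f (p, w) = f (p, w')"
proof -
  obtain u where u: "((J 0 - Jmod (p - p')) * u) mod N = 1"
    using J_diff_unit diff_mod_nonzero[OF p(1,2,4)] mod_in_zn unfolding Jmod_def by blast
  have "\<forall>w \<in> zn n. f (p, w) = f (p, (w + (J 0 - Jmod (p - p'))) mod N)"
    using hom_snd_shift_of_collision[OF p(1-3) _ collision] by blast
  from const_of_shift_invariant[OF u this w] show ?thesis .
qed

lemma hom_row_const_spread:
  assumes p: "p \<in> zn n" and row: "\<And>w w'. w \<in> zn n \<Longrightarrow> w' \<in> zn n \<Longrightarrow> f (p, w) = f (p, w')"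
    and m: "m \<in> zn n" and v: "v \<in> zn n" "v' \<in> zn n"
  shows "f (m, v) = f (m, v')"
proof -
  define q where "q = (m - p) mod N"
  have "(p + q - 0) mod N = m mod N" unfolding q_def by (simp add: mod_add_right_eq)
  then have "Jmod (p + q - 0) = Jmod m" by (rule Jmod_cong)
  then have lift: "sig6 n J (0, q) (p, (w + Jmod m) mod N) = (m, w)" if "w \<in> zn n" for w
    using m that by (simp add: sig6_eq_reduce q_def mod_simps)
  have "f (sig6 n J (0, q) (p, (v + Jmod m) mod N)) = f (sig6 n J (0, q) (p, (v' + Jmod m) mod N))"
    by (rule hom_sig6_cong_right) (simp_all add: p q_def row)
  then show ?thesis using lift v by simp
qed

lemma hom_const_of_collision:
  assumes "p \<in> zn n" "p' \<in> zn n" "c \<in> zn n" "p \<noteq> p'" "f (p, c) = f (p', c)"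
  shows "\<forall>y \<in> X. f y = f (0, 0)"
proof
  have row: "f (m, v) = f (m, v')" if "m \<in> zn n" "v \<in> zn n" "v' \<in> zn n" for m v v'
    using hom_row_const_spread[OF assms(1) hom_row_const_of_collision[OF assms]] that by blast
  fix y assume y: "y \<in> X"
  then obtain m v where y0: "y = (m, v)" "m \<in> zn n" "v \<in> zn n" by blast
  have "f (sig6 n J (0, m) (0, 0)) = f (sig6 n J (0, 0) (0, 0))"
    using row[of 0 m 0] y0 by (intro hom_sig6_cong_left) auto
  then have "f (m, (- Jmod m) mod N) = f (0, (- J 0) mod N)" using y0 by (simp add: sig6_eq_reduce)
  then show "f y = f (0, 0)" using row y0 by (metis mod_in_zn zero_in_zn)
qed

lemma hom_collision_iterate:
  assumes i: "i \<in> zn n" "i' \<in> zn n" and collision: "f (i, b mod N) = f (i', b' mod N)"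
  shows "f (i, (b - int t * J 0) mod N) = f (i', (b' - int t * Jmod (i' - i)) mod N)"
proof (induction t)
  case (Suc t)
  \<comment> \<open>\<sigma>(i,0) fixes first coordinates; it lowers row i by J 0 but row i' by J (i' - i)\<close>
  have "sig6 n J (i, 0) (i, (b - int t * J 0) mod N) = (i, (b - int (Suc t) * J 0) mod N)"
    using i by (simp add: sig6_eq_reduce mod_simps algebra_simps)
  moreover have "sig6 n J (i, 0) (i', (b' - int t * Jmod (i' - i)) mod N)
      = (i', (b' - int (Suc t) * Jmod (i' - i)) mod N)"
    using i by (simp add: sig6_eq_reduce mod_simps algebra_simps)
  ultimately show ?case
    using hom_sig6_cong_right[OF _ _ _ Suc, of "(i, 0)"] i by simp
qed (use collision in simp)

lemma hom_const_of_collision_same_row: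
  assumes i: "i \<in> zn n" "a \<in> zn n" "a' \<in> zn n" "a \<noteq> a'" and collision: "f (i, a) = f (i, a')"
  shows "\<forall>y \<in> X. f y = f (0, 0)"
proof -
  \<comment> \<open>the inverses of \<sigma>(i,a) and \<sigma>(i,a') send (0,0) to distinct rows at equal height\<close>
  have "f (sig_inv (i, a) (0, 0)) = f (sig_inv (i, a') (0, 0))"
    by (rule hom_sig_inv_cong_left) (simp_all add: i collision)
  then have "f ((- a) mod N, Jmod (- i)) = f ((- a') mod N, Jmod (- i))"
    by (simp add: sig_inv_Pair)
  moreover have "(- a) mod N \<noteq> (- a') mod N"
    using uminus_mod_inj_on_zn[OF i(2,3)] i(4) by blast
  ultimately show ?thesis
    using hom_const_of_collision[OF mod_in_zn mod_in_zn Jmod_in_zn] by blast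
qed

lemma hom_const_of_collision_distinct_rows:
  assumes i: "i \<in> zn n" "i' \<in> zn n" "i \<noteq> i'" and collision: "f (i, a mod N) = f (i', a' mod N)"
  shows "\<forall>y \<in> X. f y = f (0, 0)"
proof -
  obtain u where "((J 0 - Jmod (i' - i)) * u) mod N = 1"
    using J_diff_unit diff_mod_nonzero[OF i(2,1)] i(3) mod_in_zn unfolding Jmod_def by blast
  then obtain t :: nat where t: "(int t * (J 0 - Jmod (i' - i))) mod N = (a - a') mod N"
    using unit_multiple_exists by blast
  have "N dvd int t * (J 0 - Jmod (i' - i)) - (a - a')"
    using t by (simp add: mod_eq_dvd_iff)
  also have "int t * (J 0 - Jmod (i' - i)) - (a - a') = (a' - int t * Jmod (i' - i)) - (a - int t * J 0)"
    by (simp add: algebra_simps)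
  finally have shift: "(a' - int t * Jmod (i' - i)) mod N = (a - int t * J 0) mod N"
    by (simp add: mod_eq_dvd_iff)
  from hom_collision_iterate[OF i(1,2) collision, of t]
  have "f (i, (a - int t * J 0) mod N) = f (i', (a - int t * J 0) mod N)"
    by (simp only: shift)
  then show ?thesis
    using hom_const_of_collision[OF i(1,2) mod_in_zn i(3)] by blast
qed

lemma hom_const_if_not_inj:
  assumes "\<not> inj_on f X"
  shows "\<forall>y \<in> X. f y = f (0, 0)"
proof -
  obtain x x' where "x \<in> X" "x' \<in> X" "x \<noteq> x'" "f x = f x'"
    using assms unfolding inj_on_def by blast
  then obtain i a i' a' where i: "i \<in> zn n" "a \<in> zn n" "i' \<in> zn n" "a' \<in> zn n"
    and ne: "(i, a) \<noteq> (i', a')" and collision: "f (i, a) = f (i', a')"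
    by (metis mem_Sigma_iff surj_pair)
  show ?thesis
  proof (cases "i = i'")
    case True
    then have "a \<noteq> a'" "f (i, a) = f (i, a')" using ne collision by simp_all
    then show ?thesis using hom_const_of_collision_same_row[OF i(1,2,4)] by blast
  next
    case False
    have "f (i, a mod N) = f (i', a' mod N)" using i collision by simp
    then show ?thesis by (rule hom_const_of_collision_distinct_rows[OF i(1,3) False])
  qed
qed

end

lemma simple_sol_r6:
  assumes "\<forall>i \<in> zn n. i \<noteq> 0 \<longrightarrow> (\<exists>u \<in> zn n. ((J 0 - J i) * u) mod N = 1)"
  shows "simple_sol TYPE('b) X (r6 n J)"
proof (rule simple_solI)
  have "card X = n * n" by (simp add: zn_def card_cartesian_product)
  then show "card X > 1" using n_gt by (metis less_1_mult)
qed (use hom_const_if_not_inj assms in blast)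

end

theorem mainTheorem6:
  fixes n :: nat and J :: "int \<Rightarrow> int"
  assumes n_gt: "n > 1"
    and J_range: "\<forall>i \<in> zn n. J i \<in> zn n"
    and J_sym: "\<forall>i \<in> zn n. J ((- i) mod int n) = J i"
    and J_shift: "\<forall>i \<in> zn n. i \<noteq> 0 \<longrightarrow> (\<exists>k \<in> zn n. J ((i + k) mod int n) \<noteq> J k)"
    and J_gen: "generate (integer_mod_group n) (J ` zn n) = carrier (integer_mod_group n)"
  shows "is_solution (zn n \<times> zn n) (r6 n J)
       \<and> indecomposable (zn n \<times> zn n) (r6 n J)
       \<and> irretractable (zn n \<times> zn n) (r6 n J)
       \<and> ((\<forall>i \<in> zn n. i \<noteq> 0 \<longrightarrow> (\<exists>u \<in> zn n. ((J 0 - J i) * u) mod int n = 1))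
          \<longrightarrow> simple_sol TYPE('b) (zn n \<times> zn n) (r6 n J))"
proof -
  interpret cyclic_solution n J using n_gt J_range J_sym by unfold_locales
  show ?thesis
    using is_solution_r6 indecomposable_r6[OF J_gen] irretractable_r6[OF J_shift] simple_sol_r6
    by blast
qed

end
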